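(* Let $t \geq 1$ and $k \geq 1$ be integers, and let $\mathcal{F}$ be a finite family of finite sets with $\alpha(\mathcal{F}) \geq t$ and $\beta(\mathcal{F},t) = \frac{l(\mathcal{F},t)}{|\mathcal{F}|}$. Let $\mathcal{A}_1, \dots, \mathcal{A}_k$ be cross-$t$-intersecting sub-families of $\mathcal{F}$ such that $\sum_{i=1}^k |\mathcal{A}_i|$ is maximum among all $k$-tuples of cross-$t$-intersecting sub-families of $\mathcal{F}$. Then \[\sum_{i=1}^k |\mathcal{A}_i| = \begin{cases} |\mathcal{F}| & \text{if } k \leq \frac{|\mathcal{F}|}{l(\mathcal{F},t)};\\ k\, l(\mathcal{F},t) & \text{if } k \geq \frac{|\mathcal{F}|}{l(\mathcal{F},t)}.\end{cases}\] Moreover, (i) if $k < \frac{|\mathcal{F}|}{l(\mathcal{F},t)}$, then $\mathcal{A}_i = \mathcal{A}_i^{t,-}$ for all $i \in [k]$, and $\mathcal{A}_1, \dots, \mathcal{A}_k$ partition $\mathcal{F}$; (ii) if $k > \frac{|\mathcal{F}|}{l(\mathcal{F},t)}$, then $\mathcal{A}_1 = \dots = \mathcal{A}_k = \mathcal{L}$ for some largest $t$-intersecting sub-family $\mathcal{L}$ of $\mathcal{F}$.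
   Context: All sets and families are finite. A family $\mathcal{A}$ is $t$-intersecting if $|A \cap B| \geq t$ for all $A, B \in \mathcal{A}$ with $A \neq B$. Families $\mathcal{A}_1, \dots, \mathcal{A}_k$ (not necessarily distinct or non-empty) are cross-$t$-intersecting if for all $i \neq j$, $|A \cap B| \geq t$ for every $A \in \mathcal{A}_i$, $B \in \mathcal{A}_j$. For non-empty $\mathcal{F}$: $\alpha(\mathcal{F}) = \max\{|F| : F \in \mathcal{F}\}$; $l(\mathcal{F},t)$ is the size of a largest $t$-intersecting sub-family of $\mathcal{F}$. For a family $\mathcal{A}$, $\mathcal{A}^{t,+} = \{A \in \mathcal{A} : |A \cap B| \geq t \text{ for all } B \in \mathcal{A}\setminus\{A\}\}$ and $\mathcal{A}^{t,-} = \mathcal{A} \setminus \mathcal{A}^{t,+}$. For $\mathcal{A} \subseteq \mathcal{F}$, $\beta(\mathcal{F},t,\mathcal{A}) = \frac{l(\mathcal{F},t) - |\mathcal{A}^{t,+}|}{|\mathcal{A}^{t,-}|}$ if $\mathcal{A}^{t,-} \neq \emptyset$, and $\frac{l(\mathcal{F},t)}{|\mathcal{F}|}$ otherwise; $\beta(\mathcal{F},t) = \min_{\mathcal{A} \subseteq \mathcal{F}} \beta(\mathcal{F},t,\mathcal{A})$. $[k] = \{1,\dots,k\}$. *)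

theory Defs
  imports Complex_Main
begin

definition t_intersecting :: "nat \<Rightarrow> 'a set set \<Rightarrow> bool" where
  "t_intersecting t \<A> \<longleftrightarrow> (\<forall>A\<in>\<A>. \<forall>B\<in>\<A>. A \<noteq> B \<longrightarrow> t \<le> card (A \<inter> B))"

definition cross_t_intersecting :: "nat \<Rightarrow> nat \<Rightarrow> (nat \<Rightarrow> 'a set set) \<Rightarrow> bool" where
  "cross_t_intersecting t k \<A> \<longleftrightarrow>
     (\<forall>i\<in>{1..k}. \<forall>j\<in>{1..k}. i \<noteq> j \<longrightarrow>
        (\<forall>A\<in>\<A> i. \<forall>B\<in>\<A> j. t \<le> card (A \<inter> B)))"

definition alpha :: "'a set set \<Rightarrow> nat" where
  "alpha \<F> = Max (card ` \<F>)"

definition lmax :: "'a set set \<Rightarrow> nat \<Rightarrow> nat" where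
  "lmax \<F> t = Max (card ` {\<S>. \<S> \<subseteq> \<F> \<and> t_intersecting t \<S>})"

definition plus_part :: "nat \<Rightarrow> 'a set set \<Rightarrow> 'a set set" where
  "plus_part t \<A> = {A \<in> \<A>. \<forall>B \<in> \<A> - {A}. t \<le> card (A \<inter> B)}"

definition minus_part :: "nat \<Rightarrow> 'a set set \<Rightarrow> 'a set set" where
  "minus_part t \<A> = \<A> - plus_part t \<A>"

definition beta_at :: "'a set set \<Rightarrow> nat \<Rightarrow> 'a set set \<Rightarrow> real" where
  "beta_at \<F> t \<A> =
     (if minus_part t \<A> \<noteq> {}
      then (real (lmax \<F> t) - real (card (plus_part t \<A>))) / real (card (minus_part t \<A>))
      else real (lmax \<F> t) / real (card \<F>))"

definition beta :: "'a set set \<Rightarrow> nat \<Rightarrow> real" where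
  "beta \<F> t = Min (beta_at \<F> t ` Pow \<F>)"

end

theory Submission
  imports Defs
begin

text \<open>Let \<open>U\<close> be the union of the \<open>\<A> i\<close>, \<open>P\<close> its plus part and \<open>Q\<close> its minus part.
  \<open>P\<close> is \<open>t\<close>-intersecting, so \<open>|P| \<le> l(\<F>,t)\<close>; a member of \<open>Q\<close> lies in only one \<open>\<A> i\<close>, so
  \<open>\<Sum>|\<A> i| \<le> |Q| + k|P|\<close>; and the hypothesis on \<open>\<beta>\<close>, applied to \<open>U\<close>, gives
  \<open>l(\<F>,t) |Q| \<le> |\<F>| (l(\<F>,t) - |P|)\<close>. Comparing with the two competitors \<open>(\<F>, \<emptyset>, \<dots>, \<emptyset>)\<close>
  and \<open>(L, \<dots>, L)\<close> for a largest \<open>t\<close>-intersecting \<open>L\<close> yields \<open>\<Sum>|\<A> i| = max |\<F>| (k l(\<F>,t))\<close>,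
  and in the strict cases the same inequalities force \<open>P = \<emptyset>\<close>, respectively \<open>Q = \<emptyset>\<close>.\<close>

lemma lmax_ge:
  assumes "finite F" "S \<subseteq> F" "t_intersecting t S"
  shows "card S \<le> lmax F t"
  unfolding lmax_def using assms
  by (intro Max_ge) (auto intro: finite_subset[of _ "Pow F"])

lemma lmax_attained:
  assumes "finite F"
  obtains L where "L \<subseteq> F" "t_intersecting t L" "card L = lmax F t"
proof -
  let ?C = "{S. S \<subseteq> F \<and> t_intersecting t S}"
  have "?C \<subseteq> Pow F" by blast
  then have "finite ?C" using assms by (simp add: finite_subset)
  moreover have "{} \<in> ?C" by (simp add: t_intersecting_def)
  ultimately have "lmax F t \<in> card ` ?C" unfolding lmax_def by (intro Max_in finite_imageI) blast+
  then obtain L where "L \<in> ?C" "card L = lmax F t" by (rule imageE) simp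
  then show ?thesis by (intro that) simp_all
qed

lemma lmax_pos:
  assumes "finite F" "F \<noteq> {}"
  shows "0 < lmax F t"
proof -
  obtain X where "X \<in> F" using assms by auto
  then have "card {X} \<le> lmax F t" using assms by (intro lmax_ge) (auto simp: t_intersecting_def)
  then show ?thesis by simp
qed

lemma t_intersecting_card_member_ge:
  assumes "t_intersecting t L" "2 \<le> card L" "finite X" "X \<in> L"
  shows "t \<le> card X"
proof -
  have "\<not> L \<subseteq> {X}"
    using assms(2) card_mono[of "{X}" L] by auto
  then obtain Y where "Y \<in> L" "Y \<noteq> X" by blast
  then have "t \<le> card (X \<inter> Y)" using assms unfolding t_intersecting_def by auto
  also have "\<dots> \<le> card X" using \<open>finite X\<close> by (intro card_mono) auto
  finally show ?thesis .
qed

text \<open>The members of \<open>L\<close> must have at least \<open>t\<close> elements for \<open>(L, \<dots>, L)\<close> to be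
  cross-\<open>t\<close>-intersecting; if \<open>l(\<F>,t) = 1\<close> this is where \<open>\<alpha>(\<F>) \<ge> t\<close> is needed.\<close>
lemma largest_t_intersecting_with_large_members:
  assumes "finite F" "\<forall>X\<in>F. finite X" "F \<noteq> {}" "t \<le> alpha F"
  obtains L where "L \<subseteq> F" "t_intersecting t L" "card L = lmax F t" "\<forall>X\<in>L. t \<le> card X"
proof (cases "2 \<le> lmax F t")
  case True
  obtain L where L: "L \<subseteq> F" "t_intersecting t L" "card L = lmax F t"
    by (rule lmax_attained[OF \<open>finite F\<close>])
  have "t \<le> card X" if "X \<in> L" for X
  proof (rule t_intersecting_card_member_ge[OF L(2) _ _ that])
    show "2 \<le> card L" using True L(3) by simp
    show "finite X" using assms(2) L(1) that by blast
  qed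
  with L show ?thesis by (intro that) auto
next
  case False
  then have "lmax F t = 1" using lmax_pos[OF \<open>finite F\<close> \<open>F \<noteq> {}\<close>, of t] by simp
  have "alpha F \<in> card ` F" unfolding alpha_def using assms(1,3) by (intro Max_in) auto
  then obtain X where X: "X \<in> F" "t \<le> card X" using \<open>t \<le> alpha F\<close> by auto
  have "t_intersecting t {X}" by (simp add: t_intersecting_def)
  with X \<open>lmax F t = 1\<close> show ?thesis by (intro that[of "{X}"]) simp_all
qed

lemma plus_part_subset: "plus_part t A \<subseteq> A"
  unfolding plus_part_def by blast

lemma minus_part_subset: "minus_part t A \<subseteq> A"
  unfolding minus_part_def by blast

lemma minus_part_empty_iff: "minus_part t A = {} \<longleftrightarrow> plus_part t A = A"
  using plus_part_subset[of t A] unfolding minus_part_def by blast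

lemma t_intersecting_plus_part: "t_intersecting t (plus_part t A)"
  unfolding t_intersecting_def plus_part_def by auto

lemma card_plus_part_add_card_minus_part:
  assumes "finite A"
  shows "card (plus_part t A) + card (minus_part t A) = card A"
  using assms card_Diff_subset[of "plus_part t A" A]
  unfolding minus_part_def plus_part_def by (simp add: card_mono)

lemma card_parts_le_of_beta_eq:
  assumes "finite F" "A \<subseteq> F" and beta: "beta F t = real (lmax F t) / real (card F)"
  shows "lmax F t * card (minus_part t A) + card F * card (plus_part t A) \<le> card F * lmax F t"
proof (cases "minus_part t A = {}")
  case True
  have "card (plus_part t A) \<le> lmax F t" using assms
    by (intro lmax_ge t_intersecting_plus_part) (auto simp: plus_part_def)
  then show ?thesis using True by simp
next
  case False
  have "beta F t \<le> beta_at F t A" unfolding beta_def using assms by (intro Min_le) auto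
  then have "real (lmax F t) / real (card F)
      \<le> (real (lmax F t) - real (card (plus_part t A))) / real (card (minus_part t A))"
    using False beta by (simp add: beta_at_def)
  moreover have "0 < card (minus_part t A)" "0 < card F"
    using False assms finite_subset[of "minus_part t A" F]
    by (auto simp: card_gt_0_iff minus_part_def)
  ultimately have "real (lmax F t) * real (card (minus_part t A))
      \<le> (real (lmax F t) - real (card (plus_part t A))) * real (card F)"
    by (simp add: divide_le_eq le_divide_eq)
  then have "real (lmax F t * card (minus_part t A) + card F * card (plus_part t A))
      \<le> real (card F * lmax F t)"
    unfolding of_nat_add of_nat_mult left_diff_distrib by (simp add: mult.commute)
  then show ?thesis by (simp only: of_nat_le_iff)
qed

lemma cross_t_intersectingD:
  assumes "cross_t_intersecting t k \<A>" "i \<in> {1..k}" "j \<in> {1..k}" "i \<noteq> j" "X \<in> \<A> i" "Y \<in> \<A> j"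
  shows "t \<le> card (X \<inter> Y)"
  using assms unfolding cross_t_intersecting_def by blast

lemma cross_t_intersecting_const:
  assumes "t_intersecting t L" "\<forall>X\<in>L. t \<le> card X"
  shows "cross_t_intersecting t k (\<lambda>_. L)"
  using assms unfolding cross_t_intersecting_def t_intersecting_def
  by (metis Int_absorb)

lemma cross_t_intersecting_single:
  "cross_t_intersecting t k (\<lambda>i. if i = 1 then F else {})"
  unfolding cross_t_intersecting_def by auto

lemma shared_member_in_plus_part_Union:
  assumes cross: "cross_t_intersecting t k \<A>"
    and i: "i \<in> {1..k}" and j: "j \<in> {1..k}" "i \<noteq> j" and X: "X \<in> \<A> i" "X \<in> \<A> j"
  shows "X \<in> plus_part t (\<Union>m\<in>{1..k}. \<A> m)"
proof -
  have "t \<le> card (X \<inter> Y)" if "m \<in> {1..k}" "Y \<in> \<A> m" for m Y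
  proof (cases "m = i")
    case True
    then show ?thesis using cross_t_intersectingD[OF cross j(1) that(1) _ X(2) that(2)] j(2) by simp
  next
    case False
    then show ?thesis using cross_t_intersectingD[OF cross i that(1) _ X(1) that(2)] by simp
  qed
  then show ?thesis using i X(1) by (auto simp: plus_part_def)
qed

lemma plus_part_subset_plus_part_Union:
  assumes cross: "cross_t_intersecting t k \<A>" and i: "i \<in> {1..k}"
  shows "plus_part t (\<A> i) \<subseteq> plus_part t (\<Union>m\<in>{1..k}. \<A> m)"
proof
  fix X assume X: "X \<in> plus_part t (\<A> i)"
  then have Xi: "X \<in> \<A> i" by (simp add: plus_part_def)
  have "t \<le> card (X \<inter> Y)" if Y: "Y \<in> (\<Union>m\<in>{1..k}. \<A> m) - {X}" for Y
  proof -
    obtain m where m: "m \<in> {1..k}" "Y \<in> \<A> m" using Y by blast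
    show ?thesis
    proof (cases "m = i")
      case True
      then show ?thesis using X m(2) Y by (simp add: plus_part_def)
    next
      case False
      then show ?thesis using cross_t_intersectingD[OF cross i m(1) _ Xi m(2)] by simp
    qed
  qed
  then show "X \<in> plus_part t (\<Union>m\<in>{1..k}. \<A> m)" using i Xi unfolding plus_part_def by blast
qed

lemma cross_t_intersecting_partition:
  assumes cross: "cross_t_intersecting t k \<A>"
    and plus_empty: "plus_part t (\<Union>i\<in>{1..k}. \<A> i) = {}"
  shows "\<forall>i\<in>{1..k}. \<A> i = minus_part t (\<A> i)"
    and "\<forall>i\<in>{1..k}. \<forall>j\<in>{1..k}. i \<noteq> j \<longrightarrow> \<A> i \<inter> \<A> j = {}"
proof -
  show "\<forall>i\<in>{1..k}. \<A> i = minus_part t (\<A> i)"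
    using plus_part_subset_plus_part_Union[OF cross] plus_empty by (auto simp: minus_part_def)
  show "\<forall>i\<in>{1..k}. \<forall>j\<in>{1..k}. i \<noteq> j \<longrightarrow> \<A> i \<inter> \<A> j = {}"
    using shared_member_in_plus_part_Union[OF cross] plus_empty by blast
qed

lemma sum_card_cross_t_intersecting_le:
  assumes cross: "cross_t_intersecting t k \<A>" and fin: "\<forall>i\<in>{1..k}. finite (\<A> i)"
  defines "U \<equiv> \<Union>i\<in>{1..k}. \<A> i"
  shows "(\<Sum>i=1..k. card (\<A> i)) \<le> card (minus_part t U) + k * card (plus_part t U)"
proof -
  let ?M = "minus_part t U" and ?P = "plus_part t U"
  have finU: "finite U" using fin unfolding U_def by blast
  have split: "card (\<A> i) = card (\<A> i \<inter> ?M) + card (\<A> i \<inter> ?P)" if "i \<in> {1..k}" for i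
  proof -
    have "\<A> i = (\<A> i \<inter> ?M) \<union> (\<A> i \<inter> ?P)" "(\<A> i \<inter> ?M) \<inter> (\<A> i \<inter> ?P) = {}"
      using that unfolding U_def minus_part_def by auto
    then show ?thesis using fin that by (metis card_Un_disjoint finite_Int)
  qed
  have "(\<Sum>i=1..k. card (\<A> i)) = (\<Sum>i=1..k. card (\<A> i \<inter> ?M)) + (\<Sum>i=1..k. card (\<A> i \<inter> ?P))"
    using split by (simp add: sum.distrib)
  also have "(\<Sum>i=1..k. card (\<A> i \<inter> ?M)) = card (\<Union>i\<in>{1..k}. \<A> i \<inter> ?M)"
  proof (rule card_UN_disjoint[symmetric])
    show "\<forall>i\<in>{1..k}. \<forall>j\<in>{1..k}. i \<noteq> j \<longrightarrow> \<A> i \<inter> ?M \<inter> (\<A> j \<inter> ?M) = {}"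
      using shared_member_in_plus_part_Union[OF cross] unfolding U_def minus_part_def by blast
  qed (use fin in auto)
  also have "(\<Union>i\<in>{1..k}. \<A> i \<inter> ?M) = ?M"
    unfolding U_def minus_part_def by blast
  also have "(\<Sum>i=1..k. card (\<A> i \<inter> ?P)) \<le> (\<Sum>i=1..k. card ?P)"
    using finU by (intro sum_mono card_mono) (auto simp: plus_part_def)
  finally show ?thesis by simp
qed

lemma eq_if_sum_card_eq:
  assumes "finite U" "finite I" "\<forall>i\<in>I. \<A> i \<subseteq> U"
    and "(\<Sum>i\<in>I. card (\<A> i)) = card I * card U" "i \<in> I"
  shows "\<A> i = U"
proof -
  have "card (\<A> i) = card U"
    using assms by (intro sum_mono_inv[where g = "\<lambda>_. card U"]) (auto intro: card_mono)
  then show ?thesis using assms card_subset_eq by blast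
qed

text \<open>\<open>s\<close> is \<open>\<Sum>|\<A> i|\<close>, \<open>n = |\<F>|\<close>, \<open>l = l(\<F>,t)\<close>, and \<open>p\<close>, \<open>q\<close> are the sizes of the plus and
  minus part of the union.\<close>
lemma counting_squeeze:
  fixes s n l k p q :: nat
  assumes sum_le: "s \<le> q + k * p" and beta_le: "l * q + n * p \<le> n * l"
    and "p \<le> l" "0 < l" and "n \<le> s" "k * l \<le> s"
  shows "s = max n (k * l)" and "k * l < n \<Longrightarrow> p = 0" and "n < k * l \<Longrightarrow> q = 0"
proof -
  have main: "l * s + n * p \<le> n * l + k * l * p"
  proof -
    have "l * s \<le> l * q + k * l * p" using mult_le_mono2[OF sum_le, of l] by (simp add: algebra_simps)
    then show ?thesis using beta_le by linarith
  qed
  show "k * l < n \<Longrightarrow> p = 0"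
  proof -
    assume "k * l < n"
    have "n * l \<le> l * s" using \<open>n \<le> s\<close> by (simp add: mult.commute)
    then have "n * p \<le> k * l * p" using main by linarith
    then show "p = 0" using \<open>k * l < n\<close> mult_less_cancel2[of "k * l" p n] by linarith
  qed
  show "n < k * l \<Longrightarrow> q = 0"
  proof -
    assume "n < k * l"
    have "(k * l) * l \<le> l * s" using \<open>k * l \<le> s\<close> by (simp add: mult.commute)
    then have "k * l * l + n * p \<le> n * l + k * l * p" using main by linarith
    then have "k * l * (l - p) \<le> n * (l - p)"
      using \<open>p \<le> l\<close> by (simp add: diff_mult_distrib2 mult_le_mono)
    then have "l - p = 0" using \<open>n < k * l\<close> by (metis leD mult_less_cancel2 zero_less_iff_neq_zero)
    then have "p = l" using \<open>p \<le> l\<close> by simp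
    then show "q = 0" using beta_le \<open>0 < l\<close> by simp
  qed
  show "s = max n (k * l)"
  proof (cases "k * l \<le> n")
    case True
    then have "k * l * p \<le> n * p" by simp
    then have "l * s \<le> n * l" using main by linarith
    then have "s \<le> n" using \<open>0 < l\<close> by (simp add: mult.commute)
    then show ?thesis using True \<open>n \<le> s\<close> by simp
  next
    case False
    have "(k * l - n) * p \<le> (k * l - n) * l" using \<open>p \<le> l\<close> by simp
    moreover have "n * p \<le> k * l * p" "n * l \<le> k * l * l" using False by simp_all
    ultimately have "k * l * p + n * l \<le> n * p + k * l * l"
      unfolding diff_mult_distrib by linarith
    then have "l * s \<le> k * l * l" using main by linarith
    then have "s \<le> k * l" using \<open>0 < l\<close> by (simp add: mult.commute)
    then show ?thesis using False \<open>k * l \<le> s\<close> by simp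
  qed
qed

locale max_cross_t_intersecting =
  fixes \<F> :: "'a set set" and t k :: nat and \<A> :: "nat \<Rightarrow> 'a set set"
  assumes k_pos: "1 \<le> k" and finite_F: "finite \<F>" and finite_members: "\<forall>X\<in>\<F>. finite X"
    and F_nonempty: "\<F> \<noteq> {}" and t_le_alpha: "t \<le> alpha \<F>"
    and beta_eq: "beta \<F> t = real (lmax \<F> t) / real (card \<F>)"
    and subfamilies: "\<forall>i\<in>{1..k}. \<A> i \<subseteq> \<F>" and cross: "cross_t_intersecting t k \<A>"
    and maximum: "\<forall>\<B> :: nat \<Rightarrow> 'a set set. (\<forall>i\<in>{1..k}. \<B> i \<subseteq> \<F>) \<and> cross_t_intersecting t k \<B>
                  \<longrightarrow> (\<Sum>i=1..k. card (\<B> i)) \<le> (\<Sum>i=1..k. card (\<A> i))"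
begin

lemma Union_subset: "(\<Union>i\<in>{1..k}. \<A> i) \<subseteq> \<F>"
  using subfamilies by blast

lemma finite_Union: "finite (\<Union>i\<in>{1..k}. \<A> i)"
  using finite_subset[OF Union_subset finite_F] .

lemma sum_card_ge: "card \<F> \<le> (\<Sum>i=1..k. card (\<A> i))" "k * lmax \<F> t \<le> (\<Sum>i=1..k. card (\<A> i))"
proof -
  let ?B = "\<lambda>i::nat. if i = 1 then \<F> else {}"
  have "\<forall>i\<in>{1..k}. ?B i \<subseteq> \<F>" by simp
  then have "(\<Sum>i=1..k. card (?B i)) \<le> (\<Sum>i=1..k. card (\<A> i))"
    by (rule maximum[rule_format, OF conjI[OF _ cross_t_intersecting_single]])
  moreover have "(\<Sum>i=1..k. card (?B i)) = card \<F>"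
    using k_pos by (simp add: if_distrib[of card] sum.delta cong: if_cong)
  ultimately show "card \<F> \<le> (\<Sum>i=1..k. card (\<A> i))" by simp
  obtain L where L: "L \<subseteq> \<F>" "t_intersecting t L" "card L = lmax \<F> t" "\<forall>X\<in>L. t \<le> card X"
    by (rule largest_t_intersecting_with_large_members[OF finite_F finite_members F_nonempty t_le_alpha])
  have "\<forall>i\<in>{1..k}. L \<subseteq> \<F>" using L(1) by simp
  then have "(\<Sum>i=1..k. card L) \<le> (\<Sum>i=1..k. card (\<A> i))"
    by (rule maximum[rule_format, OF conjI[OF _ cross_t_intersecting_const[OF L(2,4)]]])
  then show "k * lmax \<F> t \<le> (\<Sum>i=1..k. card (\<A> i))" using L(3) by simp
qed

lemma sum_card_eq_max_and_Union_parts: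
  defines "U \<equiv> \<Union>i\<in>{1..k}. \<A> i"
  shows "(\<Sum>i=1..k. card (\<A> i)) = max (card \<F>) (k * lmax \<F> t)"
    and "k * lmax \<F> t < card \<F> \<Longrightarrow> plus_part t U = {} \<and> U = \<F>"
    and "card \<F> < k * lmax \<F> t \<Longrightarrow> minus_part t U = {} \<and> card U = lmax \<F> t"
proof -
  define s where "s = (\<Sum>i=1..k. card (\<A> i))"
  define l where "l = lmax \<F> t"
  define n where "n = card \<F>"
  define p where "p = card (plus_part t U)"
  define q where "q = card (minus_part t U)"
  have UF: "U \<subseteq> \<F>" and finU: "finite U" unfolding U_def by (fact Union_subset finite_Union)+
  have "\<forall>i\<in>{1..k}. finite (\<A> i)" using subfamilies finite_F by (meson finite_subset)
  then have sum_le: "s \<le> q + k * p"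
    using sum_card_cross_t_intersecting_le[OF cross] unfolding s_def p_def q_def U_def by simp
  have beta_le: "l * q + n * p \<le> n * l"
    using card_parts_le_of_beta_eq[OF finite_F UF beta_eq] unfolding l_def n_def p_def q_def .
  have "p \<le> l"
    unfolding p_def l_def
    by (rule lmax_ge[OF finite_F order_trans[OF plus_part_subset UF] t_intersecting_plus_part])
  have "0 < l" using lmax_pos[OF finite_F F_nonempty] unfolding l_def .
  note squeeze = counting_squeeze[OF sum_le beta_le \<open>p \<le> l\<close> \<open>0 < l\<close> sum_card_ge[folded s_def n_def l_def]]
  have card_U: "card U = p + q"
    using card_plus_part_add_card_minus_part[OF finU, of t] unfolding p_def q_def by (rule sym)
  show "(\<Sum>i=1..k. card (\<A> i)) = max (card \<F>) (k * lmax \<F> t)"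
    using squeeze(1) unfolding s_def n_def l_def .
  show "plus_part t U = {} \<and> U = \<F>" if "k * lmax \<F> t < card \<F>"
  proof
    have "p = 0" by (rule squeeze(2)[OF that[folded l_def n_def]])
    then show "plus_part t U = {}"
      using card_0_eq[OF finite_subset[OF plus_part_subset finU]] unfolding p_def by blast
    have "n \<le> card U" using card_U sum_le \<open>p = 0\<close> squeeze(1) by simp
    then have "card U = card \<F>" using card_mono[OF finite_F UF] unfolding n_def by (rule antisym[rotated])
    then show "U = \<F>" by (rule card_subset_eq[OF finite_F UF])
  qed
  show "minus_part t U = {} \<and> card U = lmax \<F> t" if "card \<F> < k * lmax \<F> t"
  proof
    have "q = 0" by (rule squeeze(3)[OF that[folded l_def n_def]])
    then show "minus_part t U = {}"
      using card_0_eq[OF finite_subset[OF minus_part_subset finU]] unfolding q_def by blast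
    have "s = k * l" using squeeze(1) that unfolding l_def n_def by simp
    then have "k * l \<le> k * p" using sum_le \<open>q = 0\<close> by simp
    then have "l \<le> p" using k_pos by simp
    then show "card U = lmax \<F> t" using card_U \<open>q = 0\<close> \<open>p \<le> l\<close> unfolding l_def by simp
  qed
qed

lemma partition_below_threshold:
  assumes "k * lmax \<F> t < card \<F>"
  shows "(\<forall>i\<in>{1..k}. \<A> i = minus_part t (\<A> i))
    \<and> (\<forall>i\<in>{1..k}. \<forall>j\<in>{1..k}. i \<noteq> j \<longrightarrow> \<A> i \<inter> \<A> j = {})
    \<and> (\<Union>i\<in>{1..k}. \<A> i) = \<F>"
proof -
  have parts: "plus_part t (\<Union>i\<in>{1..k}. \<A> i) = {} \<and> (\<Union>i\<in>{1..k}. \<A> i) = \<F>"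
    by (rule sum_card_eq_max_and_Union_parts(2)[OF assms])
  then show ?thesis using cross_t_intersecting_partition[OF cross conjunct1[OF parts]] by blast
qed

lemma all_equal_above_threshold:
  assumes less: "card \<F> < k * lmax \<F> t"
  shows "\<exists>\<L>. \<L> \<subseteq> \<F> \<and> t_intersecting t \<L> \<and> card \<L> = lmax \<F> t \<and> (\<forall>i\<in>{1..k}. \<A> i = \<L>)"
proof -
  define U where "U = (\<Union>i\<in>{1..k}. \<A> i)"
  have parts: "minus_part t U = {}" "card U = lmax \<F> t"
    using sum_card_eq_max_and_Union_parts(3)[OF less] unfolding U_def by simp_all
  then have "plus_part t U = U" by (simp add: minus_part_empty_iff)
  then have "t_intersecting t U" using t_intersecting_plus_part[of t U] by simp
  moreover have "\<A> i = U" if "i \<in> {1..k}" for i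
  proof (rule eq_if_sum_card_eq[OF _ finite_atLeastAtMost _ _ that])
    show "finite U" unfolding U_def by (fact finite_Union)
    show "\<forall>i\<in>{1..k}. \<A> i \<subseteq> U" unfolding U_def by blast
    show "(\<Sum>i\<in>{1..k}. card (\<A> i)) = card {1..k} * card U"
      using sum_card_eq_max_and_Union_parts(1) less parts(2) by simp
  qed
  ultimately show ?thesis using Union_subset parts(2) unfolding U_def by blast
qed

end

theorem theorem4p1:
  fixes \<F> :: "'a set set" and t k :: nat and \<A> :: "nat \<Rightarrow> 'a set set"
  assumes t1: "t \<ge> 1" and k1: "k \<ge> 1"
    and finF: "finite \<F>" and finmem: "\<forall>X\<in>\<F>. finite X" and Fne: "\<F> \<noteq> {}"
    and alph: "alpha \<F> \<ge> t"
    and bet: "beta \<F> t = real (lmax \<F> t) / real (card \<F>)"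
    and sub: "\<forall>i\<in>{1..k}. \<A> i \<subseteq> \<F>"
    and cross: "cross_t_intersecting t k \<A>"
    and maxi: "\<forall>\<B> :: nat \<Rightarrow> 'a set set. (\<forall>i\<in>{1..k}. \<B> i \<subseteq> \<F>) \<and> cross_t_intersecting t k \<B>
                  \<longrightarrow> (\<Sum>i=1..k. card (\<B> i)) \<le> (\<Sum>i=1..k. card (\<A> i))"
  shows "(real k \<le> real (card \<F>) / real (lmax \<F> t) \<longrightarrow> (\<Sum>i=1..k. card (\<A> i)) = card \<F>)
       \<and> (real k \<ge> real (card \<F>) / real (lmax \<F> t) \<longrightarrow> (\<Sum>i=1..k. card (\<A> i)) = k * lmax \<F> t)
       \<and> (real k < real (card \<F>) / real (lmax \<F> t) \<longrightarrow>
            (\<forall>i\<in>{1..k}. \<A> i = minus_part t (\<A> i))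
          \<and> (\<forall>i\<in>{1..k}. \<forall>j\<in>{1..k}. i \<noteq> j \<longrightarrow> \<A> i \<inter> \<A> j = {})
          \<and> (\<Union>i\<in>{1..k}. \<A> i) = \<F>)
       \<and> (real k > real (card \<F>) / real (lmax \<F> t) \<longrightarrow>
            (\<exists>\<L>. \<L> \<subseteq> \<F> \<and> t_intersecting t \<L> \<and> card \<L> = lmax \<F> t \<and> (\<forall>i\<in>{1..k}. \<A> i = \<L>)))"
proof -
  interpret max_cross_t_intersecting \<F> t k \<A>
    using k1 finF finmem Fne alph bet sub cross maxi by unfold_locales
  have "0 < real (lmax \<F> t)" using lmax_pos[OF finF Fne] by simp
  then have real_iff:
      "real k \<le> real (card \<F>) / real (lmax \<F> t) \<longleftrightarrow> k * lmax \<F> t \<le> card \<F>"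
      "real k < real (card \<F>) / real (lmax \<F> t) \<longleftrightarrow> k * lmax \<F> t < card \<F>"
      "real (card \<F>) / real (lmax \<F> t) \<le> real k \<longleftrightarrow> card \<F> \<le> k * lmax \<F> t"
      "real (card \<F>) / real (lmax \<F> t) < real k \<longleftrightarrow> card \<F> < k * lmax \<F> t"
    by (simp_all add: le_divide_eq less_divide_eq divide_le_eq divide_less_eq flip: of_nat_mult)
  have "k * lmax \<F> t \<le> card \<F> \<longrightarrow> (\<Sum>i=1..k. card (\<A> i)) = card \<F>"
    and "card \<F> \<le> k * lmax \<F> t \<longrightarrow> (\<Sum>i=1..k. card (\<A> i)) = k * lmax \<F> t"
    using sum_card_eq_max_and_Union_parts(1) by simp_all
  moreover note partition_below_threshold all_equal_above_threshold
  ultimately show ?thesis unfolding real_iff by blast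
qed

end
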